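(* Let $n\geq 4$, let $e=[1,2,\dots,n]$ be the identity permutation, and let $\mathcal{S}(e,1)=\{\pi\in S_n: d_K(e,\pi)\leq 1\}$. Then the set $\mathcal{A}=\mathcal{S}(e,1)\cup \mathcal{S}(e,1)\circ(1,2)$ is an optimal anticode of diameter $3$ in $S_n$ with respect to the Kendall's $\tau$-distance, and $|\mathcal{A}|=2(n-1)$.
   Context: $S_n$ denotes the set of all permutations of $[n]=\{1,\dots,n\}$, written $\sigma=[\sigma(1),\dots,\sigma(n)]$. Composition is defined by $(\pi\circ\sigma)(i)=\sigma(\pi(i))$. $(1,2)$ denotes the permutation $[2,1,3,4,\dots,n]$, and for a set $\mathcal{S}\subseteq S_n$ and $\pi\in S_n$, $\mathcal{S}\circ\pi=\{\sigma\circ\pi:\sigma\in\mathcal{S}\}$; thus $\sigma\circ(1,2)$ is obtained from $\sigma$ by exchanging the values $1$ and $2$. An adjacent transposition applied to $\sigma$ exchanges the entries in positions $i$ and $i+1$ for some $1\leq i\leq n-1$. The Kendall's $\tau$-distance $d_K(\sigma,\pi)$ is the minimum number of adjacent transpositions needed to transform $\sigma$ into $\pi$. An anticode of diameter $D$ is a subset $\mathcal{A}\subseteq S_n$ with $d_K(x,y)\leq D$ for all $x,y\in\mathcal{A}$; it is optimal if it has the largest possible size among all anticodes of diameter $D$ in $S_n$. *)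

theory Defs
  imports "HOL-Combinatorics.Multiset_Permutations"
begin

text \<open>Permutations of [n] in one-line notation [sigma(1),...,sigma(n)], as lists.\<close>
definition Sn :: "nat \<Rightarrow> nat list set" where
  "Sn n = permutations_of_set {1..n}"

definition identity_perm :: "nat \<Rightarrow> nat list" where
  "identity_perm n = [1..<Suc n]"

definition adj_swap :: "nat list \<Rightarrow> nat \<Rightarrow> nat list" where
  "adj_swap xs i = xs[i := xs ! Suc i, Suc i := xs ! i]"

definition adj_step :: "nat list \<Rightarrow> nat list \<Rightarrow> bool" where
  "adj_step xs ys \<longleftrightarrow> (\<exists>i. Suc i < length xs \<and> ys = adj_swap xs i)"

definition kendall_dist :: "nat list \<Rightarrow> nat list \<Rightarrow> nat" where
  "kendall_dist s p = (LEAST k. (adj_step ^^ k) s p)"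

text \<open>sigma o (1,2): exchange the values 1 and 2.\<close>
definition swap12 :: "nat list \<Rightarrow> nat list" where
  "swap12 s = map (\<lambda>v. if v = 1 then 2 else if v = 2 then 1 else v) s"

definition ball_K :: "nat \<Rightarrow> nat list \<Rightarrow> nat \<Rightarrow> nat list set" where
  "ball_K n c r = {p \<in> Sn n. kendall_dist c p \<le> r}"

definition is_anticode :: "nat \<Rightarrow> nat \<Rightarrow> nat list set \<Rightarrow> bool" where
  "is_anticode n D A \<longleftrightarrow> A \<subseteq> Sn n \<and> (\<forall>x\<in>A. \<forall>y\<in>A. kendall_dist x y \<le> D)"

definition is_optimal_anticode :: "nat \<Rightarrow> nat \<Rightarrow> nat list set \<Rightarrow> bool" where
  "is_optimal_anticode n D A \<longleftrightarrow> is_anticode n D A \<and>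
     (\<forall>B. is_anticode n D B \<longrightarrow> card B \<le> card A)"

end

theory Submission
  imports Defs
begin

text \<open>Relative to any reference permutation \<open>r\<close>, an adjacent transposition changes the set of
  inverted position pairs of a permutation by exactly one pair. Hence the symmetric difference of
  the inversion sets of \<open>x\<close> and \<open>y\<close> has at most \<open>d(x, y)\<close> elements, and its size has the parity
  of \<open>d(x, y)\<close>. Split an anticode of diameter 3 by the parity of the number of inversions; inside
  one class all distances are even. Fixing \<open>x\<^sub>0\<close> in a class, the inversion sets relative to \<open>x\<^sub>0\<close>
  of the other members have exactly two elements, are closed and co-closed under transitivity,
  and pairwise intersect. An intersecting family of 2-sets is a star or a triangle; a fixed pair
  has at most \<open>n - 2\<close> partners forming such a set, and a triangle needs \<open>n \<ge> 6\<close>. So each class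
  has at most \<open>n - 1\<close> elements and the anticode at most \<open>2(n - 1)\<close>.
  For the lower bound, the given set lies in the union of two radius-1 balls with adjacent centres, and it
  contains the identity, its \<open>n - 1\<close> neighbours and \<open>n - 2\<close> further images under \<open>(1, 2)\<close>.\<close>

section \<open>Symmetric differences and intersecting families of 2-sets\<close>

lemma sym_diff_assoc: "sym_diff A (sym_diff B C) = sym_diff (sym_diff A B) C"
  by blast

lemma card_sym_diff_singleton:
  assumes "finite S"
  shows "card (sym_diff S {p}) = (if p \<in> S then card S - 1 else Suc (card S))"
proof (cases "p \<in> S")
  case True
  then have "sym_diff S {p} = S - {p}" by blast
  then show ?thesis using True by simp
next
  case False
  then have "sym_diff S {p} = insert p S" by blast
  then show ?thesis using False assms by simp
qed

lemma card_sym_diff_add_card_Int: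
  assumes "finite A" "finite B"
  shows "card (sym_diff A B) + 2 * card (A \<inter> B) = card A + card B"
proof -
  have "card (sym_diff A B) = card (A - B) + card (B - A)"
    using assms by (intro card_Un_disjoint) auto
  moreover have "card A = card (A \<inter> B) + card (A - B)"
    by (rule card_Int_Diff[OF assms(1)])
  moreover have "card B = card (A \<inter> B) + card (B - A)"
    using card_Int_Diff[OF assms(2), of A] by (simp add: Int_commute)
  ultimately show ?thesis by simp
qed

lemma card_2_obtain:
  assumes "card S = 2" "x \<in> S"
  obtains y where "y \<noteq> x" "S = {x, y}"
proof -
  obtain u v where "S = {u, v}" "u \<noteq> v" using assms(1) by (auto simp: card_2_iff)
  moreover have "{u, v} = {v, u}" by blast
  ultimately show thesis using assms(2) that[of u] that[of v] by blast
qed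

lemma intersecting_2sets_star_or_triangle:
  assumes two: "\<forall>S\<in>F. card S = 2" and meet: "\<forall>S\<in>F. \<forall>T\<in>F. S \<inter> T \<noteq> {}"
  shows "(\<exists>p. \<forall>S\<in>F. p \<in> S) \<or> (\<exists>a b c. a \<noteq> b \<and> a \<noteq> c \<and> b \<noteq> c \<and> F = {{a, b}, {a, c}, {b, c}})"
proof (cases "\<exists>p. \<forall>S\<in>F. p \<in> S")
  case False
  have card: "card S = 2" if "S \<in> F" for S using two that by blast
  have meets: "S \<inter> T \<noteq> {}" if "S \<in> F" "T \<in> F" for S T using meet that by blast
  obtain S1 where "S1 \<in> F" using False by blast
  then obtain a where "a \<in> S1" using card by fastforce
  obtain b where S1: "b \<noteq> a" "S1 = {a, b}" by (rule card_2_obtain[OF card[OF \<open>S1 \<in> F\<close>] \<open>a \<in> S1\<close>])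
  obtain S2 where "S2 \<in> F" "a \<notin> S2" using False by blast
  then have "b \<in> S2" using meets[OF _ \<open>S1 \<in> F\<close>] unfolding S1(2) by auto
  obtain c where S2: "c \<noteq> b" "S2 = {b, c}" by (rule card_2_obtain[OF card[OF \<open>S2 \<in> F\<close>] \<open>b \<in> S2\<close>])
  have "c \<noteq> a" using \<open>a \<notin> S2\<close> unfolding S2(2) by auto
  obtain S3 where "S3 \<in> F" "b \<notin> S3" using False by blast
  then have "a \<in> S3" "c \<in> S3"
    using meets[OF _ \<open>S1 \<in> F\<close>] meets[OF _ \<open>S2 \<in> F\<close>] unfolding S1(2) S2(2) by auto
  obtain y where "S3 = {a, y}" by (rule card_2_obtain[OF card[OF \<open>S3 \<in> F\<close>] \<open>a \<in> S3\<close>])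
  then have S3: "S3 = {a, c}" using \<open>c \<in> S3\<close> \<open>c \<noteq> a\<close> by auto
  have "S \<in> {{a, b}, {a, c}, {b, c}}" if "S \<in> F" for S
  proof (cases "a \<in> S")
    case True
    obtain y where "S = {a, y}" by (rule card_2_obtain[OF card[OF \<open>S \<in> F\<close>] True])
    then show ?thesis using meets[OF \<open>S \<in> F\<close> \<open>S2 \<in> F\<close>] S1(1) \<open>c \<noteq> a\<close>
      unfolding S2(2) by auto
  next
    case False
    then have "b \<in> S" "c \<in> S"
      using meets[OF \<open>S \<in> F\<close> \<open>S1 \<in> F\<close>] meets[OF \<open>S \<in> F\<close> \<open>S3 \<in> F\<close>]
      unfolding S1(2) S3 by auto
    obtain y where "S = {b, y}" by (rule card_2_obtain[OF card[OF \<open>S \<in> F\<close>] \<open>b \<in> S\<close>])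
    then show ?thesis using \<open>c \<in> S\<close> \<open>c \<noteq> b\<close> by auto
  qed
  then have "F \<subseteq> {{a, b}, {a, c}, {b, c}}" by blast
  moreover have "{{a, b}, {a, c}, {b, c}} \<subseteq> F"
    using \<open>S1 \<in> F\<close> \<open>S2 \<in> F\<close> \<open>S3 \<in> F\<close> unfolding S1(2) S2(2) S3 by simp
  ultimately have "F = {{a, b}, {a, c}, {b, c}}" by (rule antisym)
  then show ?thesis using S1(1) S2(1) \<open>c \<noteq> a\<close> by blast
qed simp

section \<open>The Kendall distance\<close>

lemma relpowp_symp: "symp R \<Longrightarrow> (R ^^ m) x y \<Longrightarrow> (R ^^ m) y x"
proof (induction m arbitrary: y)
  case (Suc m)
  then obtain z where "(R ^^ m) x z" "R z y" by auto
  then show ?case using Suc by (metis relpowp_Suc_I2 sympD)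
qed simp

lemma relpowp_map:
  assumes "\<And>x y. R x y \<Longrightarrow> S (f x) (f y)"
  shows "(R ^^ m) x y \<Longrightarrow> (S ^^ m) (f x) (f y)"
proof (induction m arbitrary: y)
  case (Suc m)
  then obtain z where "(R ^^ m) x z" "R z y" by auto
  then show ?case using Suc assms by (metis relpowp_Suc_I)
qed simp

lemma SnD: "xs \<in> Sn n \<Longrightarrow> distinct xs \<and> set xs = {1..n} \<and> length xs = n"
  unfolding Sn_def permutations_of_set_def using distinct_card by fastforce

lemma finite_Sn [simp]: "finite (Sn n)"
  unfolding Sn_def by simp

lemma identity_perm_in_Sn: "identity_perm n \<in> Sn n"
  unfolding identity_perm_def Sn_def permutations_of_set_def by auto

lemma length_adj_swap [simp]: "length (adj_swap xs i) = length xs"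
  by (simp add: adj_swap_def)

lemma nth_adj_swap:
  "Suc i < length xs \<Longrightarrow> j < length xs \<Longrightarrow>
   adj_swap xs i ! j = (if j = i then xs ! Suc i else if j = Suc i then xs ! i else xs ! j)"
  by (auto simp: adj_swap_def nth_list_update)

lemma set_adj_swap [simp]: "Suc i < length xs \<Longrightarrow> set (adj_swap xs i) = set xs"
  by (simp add: adj_swap_def)

lemma distinct_adj_swap [simp]: "Suc i < length xs \<Longrightarrow> distinct (adj_swap xs i) = distinct xs"
  by (simp add: adj_swap_def)

lemma adj_swap_adj_swap: "Suc i < length xs \<Longrightarrow> adj_swap (adj_swap xs i) i = xs"
  by (rule nth_equalityI) (auto simp: nth_adj_swap)

lemma adj_swap_map: "Suc i < length xs \<Longrightarrow> adj_swap (map f xs) i = map f (adj_swap xs i)"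
  by (rule nth_equalityI) (auto simp: nth_adj_swap)

lemma symp_adj_step: "symp adj_step"
  unfolding symp_def adj_step_def by (metis adj_swap_adj_swap length_adj_swap)

lemma adj_step_map: "adj_step xs ys \<Longrightarrow> adj_step (map f xs) (map f ys)"
  unfolding adj_step_def using adj_swap_map by fastforce

lemma adj_step_Cons: "adj_step xs ys \<Longrightarrow> adj_step (a # xs) (a # ys)"
  unfolding adj_step_def
  by (metis (no_types, lifting) Suc_less_eq adj_swap_def length_Cons list_update_code(3) nth_Cons_Suc)

lemma adj_step_perm: "adj_step xs ys \<Longrightarrow> set ys = set xs \<and> distinct ys = distinct xs"
  unfolding adj_step_def by auto

lemma rtranclp_adj_step_perm:
  "adj_step\<^sup>*\<^sup>* xs ys \<Longrightarrow> set ys = set xs \<and> distinct ys = distinct xs"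
  by (induction rule: rtranclp_induct) (auto dest: adj_step_perm)

lemma rtranclp_adj_step_move_to_front: "adj_step\<^sup>*\<^sup>* (as @ y # bs) (y # as @ bs)"
proof (induction as arbitrary: bs rule: rev_induct)
  case (snoc a as)
  have "adj_step (as @ a # y # bs) (as @ y # a # bs)"
    unfolding adj_step_def
    by (intro exI[of _ "length as"]) (auto simp: adj_swap_def list_update_append nth_append)
  then show ?case using snoc.IH by (simp add: converse_rtranclp_into_rtranclp)
qed simp

lemma rtranclp_adj_step_if_perm:
  "distinct xs \<Longrightarrow> distinct ys \<Longrightarrow> set xs = set ys \<Longrightarrow> adj_step\<^sup>*\<^sup>* xs ys"
proof (induction ys arbitrary: xs)
  case (Cons y ys)
  have "y \<in> set xs" using Cons.prems by simp
  then obtain as bs where xs: "xs = as @ y # bs" by (meson split_list)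
  have "set (as @ bs) = set (y # ys) - {y}"
    using Cons.prems(1,3) unfolding xs by auto
  then have "adj_step\<^sup>*\<^sup>* (as @ bs) ys"
    using Cons.prems unfolding xs by (intro Cons.IH) auto
  then have "adj_step\<^sup>*\<^sup>* (y # as @ bs) (y # ys)"
    by (induction rule: rtranclp_induct) (auto intro: rtranclp.rtrancl_into_rtrancl adj_step_Cons)
  with rtranclp_adj_step_move_to_front show ?case
    unfolding xs by (rule rtranclp_trans)
qed simp

lemma kendall_dist_le: "(adj_step ^^ m) xs ys \<Longrightarrow> kendall_dist xs ys \<le> m"
  unfolding kendall_dist_def by (rule Least_le)

lemma kendall_dist_self [simp]: "kendall_dist xs xs = 0"
  using kendall_dist_le[of 0 xs xs] by simp

lemma kendall_dist_adj_step: "adj_step xs ys \<Longrightarrow> kendall_dist xs ys \<le> 1"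
  by (metis kendall_dist_le relpowp_1)

lemma relpowp_kendall_dist:
  "distinct xs \<Longrightarrow> distinct ys \<Longrightarrow> set xs = set ys \<Longrightarrow> (adj_step ^^ kendall_dist xs ys) xs ys"
  unfolding kendall_dist_def
  by (rule LeastI_ex) (meson rtranclp_adj_step_if_perm rtranclp_imp_relpowp)

lemma relpowp_kendall_dist_Sn:
  "xs \<in> Sn n \<Longrightarrow> ys \<in> Sn n \<Longrightarrow> (adj_step ^^ kendall_dist xs ys) xs ys"
  by (simp add: SnD relpowp_kendall_dist)

lemma kendall_dist_sym: "xs \<in> Sn n \<Longrightarrow> ys \<in> Sn n \<Longrightarrow> kendall_dist xs ys = kendall_dist ys xs"
  by (meson antisym kendall_dist_le relpowp_kendall_dist_Sn relpowp_symp symp_adj_step)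

lemma kendall_dist_triangle:
  assumes "xs \<in> Sn n" "ys \<in> Sn n" "zs \<in> Sn n"
  shows "kendall_dist xs zs \<le> kendall_dist xs ys + kendall_dist ys zs"
  using relpowp_trans[OF relpowp_kendall_dist_Sn[OF assms(1,2)] relpowp_kendall_dist_Sn[OF assms(2,3)]]
  by (rule kendall_dist_le)

lemma kendall_dist_map_le:
  "xs \<in> Sn n \<Longrightarrow> ys \<in> Sn n \<Longrightarrow> kendall_dist (map f xs) (map f ys) \<le> kendall_dist xs ys"
  using relpowp_map[of adj_step adj_step "map f", OF adj_step_map relpowp_kendall_dist_Sn]
  by (simp add: kendall_dist_le)

section \<open>Inversion sets\<close>

definition precedes :: "'a list \<Rightarrow> 'a \<Rightarrow> 'a \<Rightarrow> bool" where
  "precedes xs u v \<longleftrightarrow> (\<exists>i j. i < j \<and> j < length xs \<and> xs ! i = u \<and> xs ! j = v)"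

lemma precedes_nth_iff:
  "distinct xs \<Longrightarrow> i < length xs \<Longrightarrow> j < length xs \<Longrightarrow> precedes xs (xs ! i) (xs ! j) \<longleftrightarrow> i < j"
  unfolding precedes_def by (metis nth_eq_iff_index_eq order.strict_trans)

lemma precedesD: "precedes xs u v \<Longrightarrow> u \<in> set xs \<and> v \<in> set xs"
  unfolding precedes_def by auto

lemma precedes_irrefl: "distinct xs \<Longrightarrow> \<not> precedes xs u u"
  unfolding precedes_def by (metis nat_neq_iff nth_eq_iff_index_eq order.strict_trans)

lemma precedes_asym: "distinct xs \<Longrightarrow> precedes xs u v \<Longrightarrow> \<not> precedes xs v u"
  unfolding precedes_def by (metis not_less_iff_gr_or_eq nth_eq_iff_index_eq order.strict_trans)

lemma precedes_trans: "distinct xs \<Longrightarrow> precedes xs u v \<Longrightarrow> precedes xs v w \<Longrightarrow> precedes xs u w"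
  unfolding precedes_def by (metis nth_eq_iff_index_eq order.strict_trans)

lemma precedes_total: "u \<in> set xs \<Longrightarrow> v \<in> set xs \<Longrightarrow> u \<noteq> v \<Longrightarrow> precedes xs u v \<or> precedes xs v u"
  unfolding precedes_def in_set_conv_nth by (metis nat_neq_iff)

lemma precedes_Cons: "precedes (a # xs) u v \<longleftrightarrow> (u = a \<and> v \<in> set xs) \<or> precedes xs u v"
proof
  assume "precedes (a # xs) u v"
  then obtain i j where ij: "i < j" "j < Suc (length xs)" "(a # xs) ! i = u" "(a # xs) ! j = v"
    unfolding precedes_def by auto
  show "(u = a \<and> v \<in> set xs) \<or> precedes xs u v"
  proof (cases i)
    case 0
    then show ?thesis using ij by (cases j) auto
  next
    case (Suc i')
    then obtain j' where "j = Suc j'" using ij by (cases j) auto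
    then show ?thesis using ij Suc unfolding precedes_def by auto
  qed
next
  assume "(u = a \<and> v \<in> set xs) \<or> precedes xs u v"
  then show "precedes (a # xs) u v"
  proof
    assume "u = a \<and> v \<in> set xs"
    then obtain j where "j < length xs" "xs ! j = v" "u = a" by (auto simp: in_set_conv_nth)
    then show ?thesis unfolding precedes_def by (intro exI[of _ 0] exI[of _ "Suc j"]) auto
  next
    assume "precedes xs u v"
    then obtain i j where "i < j" "j < length xs" "xs ! i = u" "xs ! j = v"
      unfolding precedes_def by blast
    then show ?thesis unfolding precedes_def by (intro exI[of _ "Suc i"] exI[of _ "Suc j"]) auto
  qed
qed

lemma list_eq_if_precedes_eq:
  "distinct xs \<Longrightarrow> distinct ys \<Longrightarrow> set xs = set ys \<Longrightarrow> precedes xs = precedes ys \<Longrightarrow> xs = ys"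
proof (induction xs arbitrary: ys)
  case (Cons a xs)
  then obtain b ys' where ys: "ys = b # ys'" by (cases ys) auto
  have "a = b"
  proof (rule ccontr)
    assume "a \<noteq> b"
    then have "b \<in> set xs" using Cons.prems(3) ys by auto
    then have "precedes (a # xs) a b" by (simp add: precedes_Cons)
    then have "precedes ys a b" using Cons.prems(4) by simp
    then show False using Cons.prems(2) ys \<open>a \<noteq> b\<close> by (auto simp: precedes_Cons dest: precedesD)
  qed
  have "precedes xs u v \<longleftrightarrow> precedes ys' u v" for u v
    using fun_cong[OF fun_cong[OF Cons.prems(4)], of u v] Cons.prems(1,2) ys \<open>a = b\<close>
    by (cases "u = a \<or> v = a") (auto simp: precedes_Cons dest: precedesD)
  moreover have "set xs = set ys'"
    using Cons.prems(1-3) ys \<open>a = b\<close> by (metis distinct.simps(2) insert_ident list.simps(15))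
  ultimately have "xs = ys'" using Cons.prems ys by (intro Cons.IH) auto
  then show ?case using ys \<open>a = b\<close> by simp
qed simp

lemma precedes_adj_swap:
  assumes "distinct xs" and k: "Suc k < length xs"
  shows "precedes (adj_swap xs k) u v \<longleftrightarrow>
    (precedes xs u v \<and> \<not> (u = xs ! k \<and> v = xs ! Suc k)) \<or> (u = xs ! Suc k \<and> v = xs ! k)"
proof (cases "u \<in> set xs \<and> v \<in> set xs")
  case False
  then show ?thesis using k by (auto dest: precedesD)
next
  case True
  then obtain p q where pq: "p < length xs" "q < length xs" "u = xs ! p" "v = xs ! q"
    by (auto simp: in_set_conv_nth)
  define t where "t i = (if i = k then Suc k else if i = Suc k then k else i)" for i
  have t: "i < length xs \<Longrightarrow> t i < length xs \<and> adj_swap xs k ! t i = xs ! i" for i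
    using k by (auto simp: t_def nth_adj_swap)
  have "precedes (adj_swap xs k) u v \<longleftrightarrow> t p < t q"
    using precedes_nth_iff[of "adj_swap xs k" "t p" "t q"] t pq assms by simp
  moreover have "precedes xs u v \<longleftrightarrow> p < q"
    using precedes_nth_iff[OF assms(1)] pq by simp
  moreover have "u = xs ! k \<longleftrightarrow> p = k" "v = xs ! Suc k \<longleftrightarrow> q = Suc k"
      "u = xs ! Suc k \<longleftrightarrow> p = Suc k" "v = xs ! k \<longleftrightarrow> q = k"
    using pq assms by (auto simp: nth_eq_iff_index_eq)
  moreover have "t p < t q \<longleftrightarrow> (p < q \<and> \<not> (p = k \<and> q = Suc k)) \<or> (p = Suc k \<and> q = k)"
    by (auto simp: t_def)
  ultimately show ?thesis by simp
qed

text \<open>For \<open>r\<close> the identity permutation these are the usual inversions of \<open>xs\<close>.\<close>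
definition inversions :: "'a list \<Rightarrow> 'a list \<Rightarrow> (nat \<times> nat) set" where
  "inversions r xs = {(i, j). i < j \<and> j < length r \<and> precedes xs (r ! j) (r ! i)}"

lemma mem_inversions_iff:
  "(i, j) \<in> inversions r xs \<longleftrightarrow> i < j \<and> j < length r \<and> precedes xs (r ! j) (r ! i)"
  by (simp add: inversions_def)

lemma finite_inversions [simp]: "finite (inversions r xs)"
  by (rule finite_subset[of _ "{..<length r} \<times> {..<length r}"]) (auto simp: inversions_def)

lemma inversions_self: "distinct r \<Longrightarrow> inversions r r = {}"
  unfolding inversions_def using precedes_nth_iff by fastforce

lemma inversions_inject:
  assumes r: "distinct r" and xs: "distinct xs" "set xs = set r" and ys: "distinct ys" "set ys = set r"
    and eq: "inversions r xs = inversions r ys"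
  shows "xs = ys"
proof (rule list_eq_if_precedes_eq[OF xs(1) ys(1)])
  have "precedes xs u v \<longleftrightarrow> precedes ys u v" for u v
  proof (cases "u \<in> set r \<and> v \<in> set r")
    case False
    then show ?thesis using xs ys by (auto dest: precedesD)
  next
    case True
    then obtain i j where ij: "i < length r" "j < length r" "u = r ! i" "v = r ! j"
      by (auto simp: in_set_conv_nth)
    have inv: "precedes xs (r ! b) (r ! a) \<longleftrightarrow> precedes ys (r ! b) (r ! a)"
      if "a < b" "b < length r" for a b
      by (metis eq mem_inversions_iff that)
    consider "i < j" | "i = j" | "j < i" by linarith
    then show ?thesis
    proof cases
      case 1
      then have "u \<noteq> v" using ij r by (simp add: nth_eq_iff_index_eq)
      then have "precedes zs u v \<longleftrightarrow> \<not> precedes zs v u" if "distinct zs" "set zs = set r" for zs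
        using that True precedes_total precedes_asym by metis
      then show ?thesis using inv[OF 1 ij(2)] ij xs ys by simp
    next
      case 2
      then show ?thesis using ij precedes_irrefl[OF xs(1)] precedes_irrefl[OF ys(1)] by simp
    next
      case 3
      then show ?thesis using inv[OF 3 ij(1)] ij by simp
    qed
  qed
  then show "precedes xs = precedes ys" by blast
qed (use xs ys in simp)

lemma inversions_adj_swap:
  assumes "distinct r" "distinct xs" "set xs = set r" and k: "Suc k < length xs"
  obtains p where "inversions r (adj_swap xs k) = sym_diff (inversions r xs) {p}"
proof -
  obtain a b where ab: "a < length r" "b < length r" "r ! a = xs ! k" "r ! b = xs ! Suc k"
    using k assms(3) by (metis in_set_conv_nth nth_mem Suc_lessD)
  have "xs ! k \<noteq> xs ! Suc k" using assms(2) k by (simp add: nth_eq_iff_index_eq)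
  then have "a \<noteq> b" using ab by auto
  have before: "precedes xs (xs ! k) (xs ! Suc k)" "\<not> precedes xs (xs ! Suc k) (xs ! k)"
    using precedes_nth_iff[OF assms(2), of k "Suc k"] precedes_asym[OF assms(2)] k by auto
  have "(i, j) \<in> inversions r (adj_swap xs k) \<longleftrightarrow>
        (i, j) \<in> sym_diff (inversions r xs) {(min a b, max a b)}" for i j
  proof (cases "i < j \<and> j < length r")
    case False
    then show ?thesis using ab \<open>a \<noteq> b\<close> unfolding inversions_def by (auto simp: min_def max_def)
  next
    case True
    then have "r ! i = xs ! k \<longleftrightarrow> i = a" "r ! j = xs ! k \<longleftrightarrow> j = a"
      "r ! i = xs ! Suc k \<longleftrightarrow> i = b" "r ! j = xs ! Suc k \<longleftrightarrow> j = b"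
      using ab(1,2) ab(3,4)[symmetric] assms(1) by (auto simp: nth_eq_iff_index_eq)
    then show ?thesis
      using True before ab \<open>a \<noteq> b\<close> unfolding inversions_def precedes_adj_swap[OF assms(2) k]
      by (auto simp: min_def max_def)
  qed
  then have "inversions r (adj_swap xs k) = sym_diff (inversions r xs) {(min a b, max a b)}"
    by auto
  then show thesis by (rule that)
qed

lemma card_sym_diff_inversions_relpowp:
  assumes "(adj_step ^^ m) xs ys" "distinct r" "distinct xs" "set xs = set r"
  shows "card (sym_diff (inversions r xs) (inversions r ys)) \<le> m \<and>
         even (card (sym_diff (inversions r xs) (inversions r ys)) + m)"
  using assms(1)
proof (induction m arbitrary: ys)
  case 0
  then show ?case by simp
next
  case (Suc m)
  then obtain zs where zs: "(adj_step ^^ m) xs zs" "adj_step zs ys" by auto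
  then obtain k where k: "Suc k < length zs" "ys = adj_swap zs k" unfolding adj_step_def by blast
  have zs_perm: "set zs = set r" "distinct zs"
    using rtranclp_adj_step_perm[OF relpowp_imp_rtranclp[OF zs(1)]] assms(3,4) by auto
  obtain p where p: "inversions r ys = sym_diff (inversions r zs) {p}"
    unfolding k(2) by (rule inversions_adj_swap[OF assms(2) zs_perm(2,1) k(1)])
  define D where "D = sym_diff (inversions r xs) (inversions r zs)"
  have "sym_diff (inversions r xs) (inversions r ys) = sym_diff D {p}"
    unfolding p D_def by (rule sym_diff_assoc)
  moreover have "finite D" by (simp add: D_def)
  ultimately have card_eq: "card (sym_diff (inversions r xs) (inversions r ys)) =
      (if p \<in> D then card D - 1 else Suc (card D))" and "p \<in> D \<Longrightarrow> card D > 0"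
    by (simp_all add: card_sym_diff_singleton card_gt_0_iff) blast
  moreover have "card D \<le> m \<and> even (card D + m)"
    unfolding D_def by (rule Suc.IH[OF zs(1)])
  ultimately show ?case unfolding card_eq by (cases "p \<in> D") auto
qed

lemma card_sym_diff_inversions_le_kendall_dist:
  assumes "xs \<in> Sn n" "ys \<in> Sn n" "r \<in> Sn n"
  shows "card (sym_diff (inversions r xs) (inversions r ys)) \<le> kendall_dist xs ys \<and>
         even (card (sym_diff (inversions r xs) (inversions r ys)) + kendall_dist xs ys)"
  using card_sym_diff_inversions_relpowp[OF relpowp_kendall_dist_Sn[OF assms(1,2)]]
    SnD[OF assms(1)] SnD[OF assms(3)] by simp

section \<open>Biclosed sets of position pairs\<close>

definition biclosed :: "nat \<Rightarrow> (nat \<times> nat) set \<Rightarrow> bool" where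
  "biclosed n S \<longleftrightarrow> S \<subseteq> {(i, j). i < j \<and> j < n} \<and>
     (\<forall>i j k. i < j \<longrightarrow> j < k \<longrightarrow> k < n \<longrightarrow> (i, j) \<in> S \<longrightarrow> (j, k) \<in> S \<longrightarrow> (i, k) \<in> S) \<and>
     (\<forall>i j k. i < j \<longrightarrow> j < k \<longrightarrow> k < n \<longrightarrow> (i, k) \<in> S \<longrightarrow> (i, j) \<in> S \<or> (j, k) \<in> S)"

lemma biclosedD:
  assumes "biclosed n S"
  shows biclosed_subset: "(i, j) \<in> S \<Longrightarrow> i < j \<and> j < n"
    and biclosed_trans: "i < j \<Longrightarrow> j < k \<Longrightarrow> k < n \<Longrightarrow> (i, j) \<in> S \<Longrightarrow> (j, k) \<in> S \<Longrightarrow> (i, k) \<in> S"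
    and biclosed_cotrans: "i < j \<Longrightarrow> j < k \<Longrightarrow> k < n \<Longrightarrow> (i, k) \<in> S \<Longrightarrow> (i, j) \<in> S \<or> (j, k) \<in> S"
  using assms unfolding biclosed_def by blast+

lemma biclosed_inversions:
  assumes r: "distinct r" and xs: "distinct xs" "set xs = set r"
  shows "biclosed (length r) (inversions r xs)"
  unfolding biclosed_def
proof (intro conjI allI impI)
  fix i j k assume "i < j" "j < k" "k < length r" "(i, j) \<in> inversions r xs" "(j, k) \<in> inversions r xs"
  then show "(i, k) \<in> inversions r xs" unfolding inversions_def using precedes_trans xs by auto
next
  fix i j k assume ijk: "i < j" "j < k" "k < length r" "(i, k) \<in> inversions r xs"
  show "(i, j) \<in> inversions r xs \<or> (j, k) \<in> inversions r xs"
  proof (rule ccontr)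
    assume "\<not> ?thesis"
    then have "\<not> precedes xs (r ! j) (r ! i)" "\<not> precedes xs (r ! k) (r ! j)"
      using ijk by (auto simp: inversions_def)
    moreover have "r ! i \<noteq> r ! j" "r ! j \<noteq> r ! k" using ijk r by (auto simp: nth_eq_iff_index_eq)
    moreover have "r ! i \<in> set xs" "r ! j \<in> set xs" "r ! k \<in> set xs" using ijk xs by auto
    ultimately have "precedes xs (r ! i) (r ! k)"
      using precedes_total precedes_trans[OF xs(1)] by metis
    moreover have "precedes xs (r ! k) (r ! i)" using ijk by (auto simp: inversions_def)
    ultimately show False using precedes_asym[OF xs(1)] by blast
  qed
qed (auto simp: inversions_def)

lemma biclosed_pair_partner_nonadjacent:
  assumes S: "biclosed n {(u, v), q}" and uv: "Suc u < v" and q: "q \<noteq> (u, v)"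
  shows "q = (u, Suc u) \<or> q = (Suc u, v)"
proof -
  have "v < n" using biclosed_subset[OF S, of u v] by simp
  then have "(u, Suc u) \<in> {(u, v), q} \<or> (Suc u, v) \<in> {(u, v), q}"
    using biclosed_cotrans[OF S, of u "Suc u" v] uv by simp
  then show ?thesis using uv by auto
qed

lemma biclosed_pair_partner_adjacent:
  assumes S: "biclosed n {(u, Suc u), (a, b)}" and ab: "(a, b) \<noteq> (u, Suc u)"
  shows "b < n \<and> a \<noteq> Suc u \<and>
    b = (if a = u then Suc (Suc u) else if Suc a = u then Suc u else Suc a)"
proof -
  let ?S = "{(u, Suc u), (a, b)}"
  have "a < b" "b < n" using biclosed_subset[OF S, of a b] by auto
  have "Suc u < n" using biclosed_subset[OF S, of u "Suc u"] by auto
  have "a \<noteq> Suc u"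
  proof
    assume "a = Suc u"
    then have "(u, b) \<in> ?S" using biclosed_trans[OF S, of u "Suc u" b] \<open>a < b\<close> \<open>b < n\<close> by simp
    then show False using \<open>a < b\<close> \<open>a = Suc u\<close> by auto
  qed
  moreover have "b = Suc (Suc u)" if "a = u"
  proof (rule ccontr)
    assume "b \<noteq> Suc (Suc u)"
    then have "Suc (Suc u) < b" using that ab \<open>a < b\<close> by auto
    then have "(u, Suc (Suc u)) \<in> ?S \<or> (Suc (Suc u), b) \<in> ?S"
      using biclosed_cotrans[OF S, of u "Suc (Suc u)" b] \<open>b < n\<close> that by simp
    then show False using that \<open>b \<noteq> Suc (Suc u)\<close> by auto
  qed
  moreover have "b = Suc u" if "Suc a = u"
  proof (rule ccontr)
    assume "b \<noteq> Suc u"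
    then have "b = u \<or> Suc u < b" using that \<open>a < b\<close> by linarith
    then show False
    proof
      assume 1: "b = u"
      then have "(a, Suc u) \<in> ?S"
        using biclosed_trans[OF S, of a u "Suc u"] that \<open>Suc u < n\<close> by simp
      then show False using that 1 by auto
    next
      assume 2: "Suc u < b"
      then have "(a, u) \<in> ?S \<or> (u, b) \<in> ?S"
        using biclosed_cotrans[OF S, of a u b] that \<open>b < n\<close> by simp
      then show False using that 2 by auto
    qed
  qed
  moreover have "b = Suc a" if "a \<noteq> u" "Suc a \<noteq> u"
  proof (rule ccontr)
    assume "b \<noteq> Suc a"
    then have "Suc a < b" using \<open>a < b\<close> by auto
    then have "(a, Suc a) \<in> ?S \<or> (Suc a, b) \<in> ?S"
      using biclosed_cotrans[OF S, of a "Suc a" b] \<open>b < n\<close> by simp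
    then show False using that \<open>b \<noteq> Suc a\<close> by auto
  qed
  ultimately show ?thesis using \<open>b < n\<close> by auto
qed

definition biclosed_partners :: "nat \<Rightarrow> nat \<times> nat \<Rightarrow> (nat \<times> nat) set" where
  "biclosed_partners n p = {q. q \<noteq> p \<and> biclosed n {p, q}}"

lemma finite_biclosed_partners: "finite (biclosed_partners n p)"
  by (rule finite_subset[of _ "{..<n} \<times> {..<n}"])
    (auto simp: biclosed_partners_def dest: biclosed_subset)

lemma card_biclosed_partners_nonadjacent_le:
  assumes "Suc u < v"
  shows "card (biclosed_partners n (u, v)) \<le> 2"
proof -
  have "biclosed_partners n (u, v) \<subseteq> {(u, Suc u), (Suc u, v)}"
    unfolding biclosed_partners_def using biclosed_pair_partner_nonadjacent assms by blast
  then have "card (biclosed_partners n (u, v)) \<le> card {(u, Suc u), (Suc u, v)}"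
    by (intro card_mono) auto
  also have "\<dots> \<le> 2" by (simp add: card_insert_if)
  finally show ?thesis .
qed

lemma card_biclosed_partners_adjacent_le:
  assumes "Suc u < n"
  shows "card (biclosed_partners n (u, Suc u)) \<le> n - 2"
proof -
  define g where "g a = (if a = u then Suc (Suc u) else if Suc a = u then Suc u else Suc a)" for a
  \<comment> \<open>no partner of \<open>(u, u + 1)\<close> has first coordinate \<open>w\<close>\<close>
  define w where "w = (if Suc u < n - 1 then Suc u else u)"
  have "biclosed_partners n (u, Suc u) \<subseteq> (\<lambda>a. (a, g a)) ` ({..<n - 1} - {w})"
  proof
    fix q assume "q \<in> biclosed_partners n (u, Suc u)"
    then obtain a b where q: "q = (a, b)" "(a, b) \<noteq> (u, Suc u)" "biclosed n {(u, Suc u), (a, b)}"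
      unfolding biclosed_partners_def by (cases q) auto
    then have "b = g a" "a \<in> {..<n - 1} - {w}"
      using biclosed_pair_partner_adjacent[OF q(3,2)] unfolding g_def w_def by (auto split: if_splits)
    then show "q \<in> (\<lambda>a. (a, g a)) ` ({..<n - 1} - {w})" using q by auto
  qed
  then have "card (biclosed_partners n (u, Suc u)) \<le> card ((\<lambda>a. (a, g a)) ` ({..<n - 1} - {w}))"
    by (intro card_mono) auto
  also have "\<dots> \<le> card ({..<n - 1} - {w})" by (rule card_image_le) simp
  also have "\<dots> = n - 2"
    using assms by (simp add: w_def card_Diff_singleton)
  finally show ?thesis .
qed

lemma card_biclosed_partners_le:
  assumes "4 \<le> n"
  shows "card (biclosed_partners n p) \<le> n - 2"
proof (cases "biclosed_partners n p = {}")
  case False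
  obtain u v where p: "p = (u, v)" by fastforce
  from False obtain q where "biclosed n {p, q}" by (auto simp: biclosed_partners_def)
  then have "u < v" "v < n" using biclosed_subset p by blast+
  then consider "v = Suc u" | "Suc u < v" by linarith
  then show ?thesis
  proof cases
    case 1
    then show ?thesis using card_biclosed_partners_adjacent_le \<open>v < n\<close> p by blast
  next
    case 2
    then show ?thesis using card_biclosed_partners_nonadjacent_le[of u v n] assms unfolding p by linarith
  qed
qed simp

lemma biclosed_triangle_adjacent:
  assumes "biclosed n {a, b}" "biclosed n {a, c}" "biclosed n {b, c}" "a \<noteq> b" "a \<noteq> c" "b \<noteq> c"
  shows "snd a = Suc (fst a)"
proof (rule ccontr)
  obtain u v where a: "a = (u, v)" by fastforce
  assume "snd a \<noteq> Suc (fst a)"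
  moreover have "u < v" "v < n" using biclosed_subset[OF assms(1), of u v] a by auto
  ultimately have uv: "Suc u < v" using a by auto
  have "b = (u, Suc u) \<or> b = (Suc u, v)" "c = (u, Suc u) \<or> c = (Suc u, v)"
    using biclosed_pair_partner_nonadjacent[OF _ uv] assms(1,2,4,5) a by auto
  then have bc: "{b, c} = {(u, Suc u), (Suc u, v)}" using assms(6) by auto
  then have "(u, v) \<in> {b, c}" using biclosed_trans[OF assms(3), of u "Suc u" v] uv \<open>v < n\<close> by simp
  then show False using bc uv by auto
qed

lemma biclosed_triangle_size:
  assumes "biclosed n {a, b}" "biclosed n {a, c}" "biclosed n {b, c}" "a \<noteq> b" "a \<noteq> c" "b \<noteq> c"
  shows "6 \<le> n"
proof -
  have swap: "{x, y} = {y, x}" for x y :: "nat \<times> nat" by blast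
  have "snd a = Suc (fst a)" "snd b = Suc (fst b)" "snd c = Suc (fst c)"
    using biclosed_triangle_adjacent[of n a b c] biclosed_triangle_adjacent[of n b a c]
      biclosed_triangle_adjacent[of n c a b] assms swap[of a b] swap[of a c] swap[of b c]
    by metis+
  then obtain i j k where ijk: "a = (i, Suc i)" "b = (j, Suc j)" "c = (k, Suc k)"
    by (metis prod.collapse)
  have far: "j \<noteq> Suc i" if "biclosed n {(i, Suc i), (j, Suc j)}" "i \<noteq> j" for i j
    using biclosed_pair_partner_adjacent[OF that(1)] that(2) by simp
  have "i \<noteq> j" "i \<noteq> k" "j \<noteq> k" using assms ijk by auto
  then have "j \<noteq> Suc i" "i \<noteq> Suc j" "k \<noteq> Suc i" "i \<noteq> Suc k" "k \<noteq> Suc j" "j \<noteq> Suc k"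
    using far assms(1-3) swap unfolding ijk by metis+
  moreover have "Suc i < n" "Suc j < n" "Suc k < n"
    using biclosed_subset[OF assms(1), of i "Suc i"] biclosed_subset[OF assms(1), of j "Suc j"]
      biclosed_subset[OF assms(2), of k "Suc k"] ijk by auto
  ultimately show ?thesis using \<open>i \<noteq> j\<close> \<open>i \<noteq> k\<close> \<open>j \<noteq> k\<close> by arith
qed

lemma card_intersecting_biclosed_family_le:
  assumes n: "4 \<le> n" and F: "\<forall>S\<in>F. biclosed n S \<and> card S = 2"
    and meet: "\<forall>S\<in>F. \<forall>T\<in>F. S \<inter> T \<noteq> {}"
  shows "card F \<le> n - 2"
proof -
  have "\<forall>S\<in>F. card S = 2" using F by blast
  from intersecting_2sets_star_or_triangle[OF this meet] show ?thesis
  proof (elim disjE exE conjE)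
    fix p assume star: "\<forall>S\<in>F. p \<in> S"
    have "F \<subseteq> (\<lambda>q. {p, q}) ` biclosed_partners n p"
    proof
      fix S assume "S \<in> F"
      then obtain q where q: "q \<noteq> p" "S = {p, q}"
        using F star card_2_obtain by metis
      then show "S \<in> (\<lambda>q. {p, q}) ` biclosed_partners n p"
        using F \<open>S \<in> F\<close> unfolding biclosed_partners_def by blast
    qed
    then have "card F \<le> card ((\<lambda>q. {p, q}) ` biclosed_partners n p)"
      by (simp add: card_mono finite_biclosed_partners)
    also have "\<dots> \<le> card (biclosed_partners n p)"
      by (simp add: card_image_le finite_biclosed_partners)
    also have "\<dots> \<le> n - 2" by (rule card_biclosed_partners_le[OF n])
    finally show ?thesis .
  next
    fix a b c assume "a \<noteq> b" "a \<noteq> c" "b \<noteq> c" and F_eq: "F = {{a, b}, {a, c}, {b, c}}"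
    then have "6 \<le> n" using F by (intro biclosed_triangle_size[of n a b c]) auto
    moreover have "card F \<le> 3" unfolding F_eq by (intro card_insert_le_m1) simp_all
    ultimately show ?thesis by linarith
  qed
qed

section \<open>Anticodes of diameter 3\<close>

lemma card_inversions_eq_2:
  assumes "xs \<in> Sn n" "ys \<in> Sn n" "xs \<noteq> ys"
    and "kendall_dist xs ys \<le> 3" "even (kendall_dist xs ys)"
  shows "card (inversions xs ys) = 2"
proof -
  have xs: "distinct xs" "set xs = {1..n}" and ys: "distinct ys" "set ys = {1..n}"
    using SnD assms(1,2) by blast+
  have "sym_diff (inversions xs xs) (inversions xs ys) = inversions xs ys"
    using inversions_self[OF xs(1)] by simp
  then have "card (inversions xs ys) \<le> 3" "even (card (inversions xs ys))"
    using card_sym_diff_inversions_le_kendall_dist[OF assms(1,2,1)] assms(4,5) by auto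
  moreover have "inversions xs ys \<noteq> inversions xs xs"
    using inversions_inject[OF xs(1) ys(1) _ xs(1)] xs(2) ys(2) assms(3) by metis
  then have "card (inversions xs ys) \<noteq> 0"
    using inversions_self[OF xs(1)] by simp
  ultimately show ?thesis by presburger
qed

lemma inversions_Int_nonempty:
  assumes "xs \<in> Sn n" "ys \<in> Sn n" "r \<in> Sn n" "kendall_dist xs ys \<le> 3"
    and "card (inversions r xs) = 2" "card (inversions r ys) = 2"
  shows "inversions r xs \<inter> inversions r ys \<noteq> {}"
proof
  assume "inversions r xs \<inter> inversions r ys = {}"
  then have "card (sym_diff (inversions r xs) (inversions r ys)) = 4"
    using card_sym_diff_add_card_Int[of "inversions r xs" "inversions r ys"] assms(5,6) by simp
  then show False
    using card_sym_diff_inversions_le_kendall_dist[OF assms(1-3)] assms(4) by simp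
qed

lemma card_even_distance_anticode_le:
  assumes n: "4 \<le> n" and E: "E \<subseteq> Sn n"
    and dist: "\<forall>x\<in>E. \<forall>y\<in>E. kendall_dist x y \<le> 3 \<and> even (kendall_dist x y)"
  shows "card E \<le> n - 1"
proof (cases "E = {}")
  case False
  then obtain x0 where "x0 \<in> E" by blast
  then have x0: "x0 \<in> Sn n" "distinct x0" "set x0 = {1..n}" "length x0 = n"
    using E SnD by blast+
  have "inj_on (inversions x0) E"
    using inversions_inject[OF x0(2)] E SnD x0(3) by (intro inj_onI) (metis subsetD)
  then have "card (inversions x0 ` (E - {x0})) = card E - 1"
    using finite_subset[OF E finite_Sn] \<open>x0 \<in> E\<close> by (simp add: card_image inj_on_diff)
  moreover have "card (inversions x0 ` (E - {x0})) \<le> n - 2"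
  proof (rule card_intersecting_biclosed_family_le[OF n], safe)
    fix x assume "x \<in> E" "x \<noteq> x0"
    then show "card (inversions x0 x) = 2"
      using card_inversions_eq_2[OF x0(1)] dist \<open>x0 \<in> E\<close> E by blast
    show "biclosed n (inversions x0 x)"
      using biclosed_inversions[OF x0(2)] x0 SnD \<open>x \<in> E\<close> E by (metis subsetD)
  next
    fix x y assume "x \<in> E" "x \<noteq> x0" "y \<in> E" "y \<noteq> x0"
      and "inversions x0 x \<inter> inversions x0 y = {}"
    then show False
      using inversions_Int_nonempty[OF _ _ x0(1)] card_inversions_eq_2[OF x0(1)] dist \<open>x0 \<in> E\<close> E
      by (metis subsetD)
  qed
  moreover have "card E \<ge> 1" using \<open>x0 \<in> E\<close> E finite_subset[OF E] card_0_eq by fastforce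
  ultimately show ?thesis using n by linarith
qed simp

lemma card_anticode_diameter_3_le:
  assumes n: "4 \<le> n" and B: "is_anticode n 3 B"
  shows "card B \<le> 2 * (n - 1)"
proof -
  define par where "par x = even (card (inversions (identity_perm n) x))" for x
  have B_Sn: "B \<subseteq> Sn n" and dist: "\<forall>x\<in>B. \<forall>y\<in>B. kendall_dist x y \<le> 3"
    using B unfolding is_anticode_def by auto
  have even_dist: "even (kendall_dist x y)" if "x \<in> B" "y \<in> B" "par x = par y" for x y
  proof -
    let ?I = "inversions (identity_perm n)"
    have "card (sym_diff (?I x) (?I y)) + 2 * card (?I x \<inter> ?I y) = card (?I x) + card (?I y)"
      by (simp add: card_sym_diff_add_card_Int)
    then have "even (card (sym_diff (?I x) (?I y)))"
      using that(3) unfolding par_def by presburger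
    then show ?thesis
      using card_sym_diff_inversions_le_kendall_dist[OF _ _ identity_perm_in_Sn] that B_Sn by fastforce
  qed
  have "card {x \<in> B. par x} \<le> n - 1" "card {x \<in> B. \<not> par x} \<le> n - 1"
    using dist even_dist B_Sn by (intro card_even_distance_anticode_le[OF n]; auto)+
  moreover have "B = {x \<in> B. par x} \<union> {x \<in> B. \<not> par x}" by blast
  then have "card B \<le> card {x \<in> B. par x} + card {x \<in> B. \<not> par x}"
    by (metis card_Un_le)
  ultimately show ?thesis by linarith
qed

lemma is_anticode_subset: "is_anticode n D B \<Longrightarrow> A \<subseteq> B \<Longrightarrow> is_anticode n D A"
  unfolding is_anticode_def by blast

lemma is_anticode_ball_union:
  assumes c: "c \<in> Sn n" "c' \<in> Sn n" "kendall_dist c c' \<le> 1"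
  shows "is_anticode n 3 (ball_K n c 1 \<union> ball_K n c' 1)"
  unfolding is_anticode_def
proof (intro conjI ballI)
  show "ball_K n c 1 \<union> ball_K n c' 1 \<subseteq> Sn n" by (auto simp: ball_K_def)
next
  have near: "\<exists>d\<in>{c, c'}. kendall_dist d x \<le> 1 \<and> x \<in> Sn n" if "x \<in> ball_K n c 1 \<union> ball_K n c' 1" for x
    using that unfolding ball_K_def by blast
  have centers: "kendall_dist d d' \<le> 1" if "d \<in> {c, c'}" "d' \<in> {c, c'}" for d d'
    using that c kendall_dist_sym[OF c(1,2)] by auto
  fix x y assume "x \<in> ball_K n c 1 \<union> ball_K n c' 1" "y \<in> ball_K n c 1 \<union> ball_K n c' 1"
  then obtain d d' where d: "d \<in> {c, c'}" "d' \<in> {c, c'}" "x \<in> Sn n" "y \<in> Sn n"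
    and "kendall_dist d x \<le> 1" "kendall_dist d' y \<le> 1"
    using near by metis
  moreover have "d \<in> Sn n" "d' \<in> Sn n" using d c by auto
  ultimately have "kendall_dist x d \<le> 1" "kendall_dist d d' \<le> 1" "kendall_dist d' y \<le> 1"
    using kendall_dist_sym centers by metis+
  moreover have "kendall_dist x y \<le> kendall_dist x d + kendall_dist d d' + kendall_dist d' y"
    using kendall_dist_triangle[of x n d y] kendall_dist_triangle[of d n d' y] d
      \<open>d \<in> Sn n\<close> \<open>d' \<in> Sn n\<close> by fastforce
  ultimately show "kendall_dist x y \<le> 3" by linarith
qed

definition swap12_val :: "nat \<Rightarrow> nat" where
  "swap12_val v = (if v = 1 then 2 else if v = 2 then 1 else v)"

lemma swap12_eq_map: "swap12 xs = map swap12_val xs"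
  unfolding swap12_def swap12_val_def ..

lemma swap12_swap12 [simp]: "swap12 (swap12 xs) = xs"
  by (simp add: swap12_eq_map swap12_val_def map_idI)

lemma swap12_in_Sn:
  assumes "2 \<le> n" "xs \<in> Sn n"
  shows "swap12 xs \<in> Sn n"
proof -
  have "bij_betw swap12_val {1..n} {1..n}"
    using assms(1) by (intro bij_betwI[of _ _ _ swap12_val]) (auto simp: swap12_val_def)
  then show ?thesis
    using assms(2) SnD[OF assms(2)] unfolding swap12_eq_map Sn_def permutations_of_set_def
    by (auto simp: distinct_map bij_betw_def inj_on_subset)
qed

lemma swap12_ball_subset:
  assumes "2 \<le> n" "c \<in> Sn n"
  shows "swap12 ` ball_K n c r \<subseteq> ball_K n (swap12 c) r"
  using assms swap12_in_Sn kendall_dist_map_le[of c n _ swap12_val]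
  unfolding ball_K_def swap12_eq_map[symmetric] by fastforce

lemma length_identity_perm [simp]: "length (identity_perm n) = n"
  by (simp add: identity_perm_def)

lemma nth_identity_perm: "j < n \<Longrightarrow> identity_perm n ! j = Suc j"
  by (simp add: identity_perm_def nth_upt del: upt_Suc)

lemma nth_adj_swap_identity_perm:
  "Suc i < n \<Longrightarrow> j < n \<Longrightarrow> adj_swap (identity_perm n) i ! j =
     (if j = i then Suc (Suc i) else if j = Suc i then Suc i else Suc j)"
  by (simp add: nth_adj_swap nth_identity_perm)

lemma swap12_identity_perm: "2 \<le> n \<Longrightarrow> swap12 (identity_perm n) = adj_swap (identity_perm n) 0"
  by (rule nth_equalityI)
    (auto simp: swap12_eq_map swap12_val_def nth_adj_swap_identity_perm nth_identity_perm)

lemma adj_swap_in_ball_K: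
  assumes "xs \<in> Sn n" "Suc i < n"
  shows "adj_swap xs i \<in> ball_K n xs 1"
proof -
  have xs: "distinct xs" "set xs = {1..n}" "length xs = n" using SnD[OF assms(1)] by auto
  then have "adj_swap xs i \<in> Sn n" using assms(2) by (simp add: Sn_def permutations_of_set_def)
  moreover have "adj_step xs (adj_swap xs i)" using xs(3) assms(2) unfolding adj_step_def by auto
  ultimately show ?thesis using kendall_dist_adj_step by (simp add: ball_K_def)
qed

lemma inj_on_adj_swap_identity_perm: "inj_on (adj_swap (identity_perm n)) {..<n - 1}"
proof (rule inj_onI)
  fix i j assume "i \<in> {..<n - 1}" "j \<in> {..<n - 1}"
    and "adj_swap (identity_perm n) i = adj_swap (identity_perm n) j"
  then have "adj_swap (identity_perm n) i ! i = adj_swap (identity_perm n) j ! i" "Suc i < n" "Suc j < n"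
    by auto
  then show "i = j" by (auto simp: nth_adj_swap_identity_perm split: if_splits)
qed

lemma adj_swap_identity_perm_neq: "Suc i < n \<Longrightarrow> adj_swap (identity_perm n) i \<noteq> identity_perm n"
  using nth_adj_swap_identity_perm[of i n i] nth_identity_perm[of i n] by auto

lemma card_identity_perm_neighbours:
  assumes "n \<noteq> 0"
  shows "card (insert (identity_perm n) (adj_swap (identity_perm n) ` {..<n - 1})) = n"
proof -
  have "identity_perm n \<notin> adj_swap (identity_perm n) ` {..<n - 1}"
  proof
    assume "identity_perm n \<in> adj_swap (identity_perm n) ` {..<n - 1}"
    then obtain i where "i < n - 1" "identity_perm n = adj_swap (identity_perm n) i" by auto
    moreover have "Suc i < n" using \<open>i < n - 1\<close> by linarith
    ultimately show False using adj_swap_identity_perm_neq[of i n] by simp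
  qed
  then show ?thesis using inj_on_adj_swap_identity_perm[of n] assms by (simp add: card_image)
qed

lemma swap12_neighbours_disjoint:
  assumes "2 \<le> n"
  shows "swap12 ` adj_swap (identity_perm n) ` {1..<n - 1} \<inter>
    insert (identity_perm n) (adj_swap (identity_perm n) ` {..<n - 1}) = {}"
proof -
  let ?e = "identity_perm n"
  have "x \<notin> insert ?e (adj_swap ?e ` {..<n - 1})" if x2: "x \<in> swap12 ` adj_swap ?e ` {1..<n - 1}" for x
  proof
    assume x: "x \<in> insert ?e (adj_swap ?e ` {..<n - 1})"
    obtain i where i: "1 \<le> i" "i < n - 1" "x = swap12 (adj_swap ?e i)" using x2 by auto
    then have "x ! 0 = 2"
      by (simp add: swap12_eq_map swap12_val_def nth_adj_swap_identity_perm)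
    then have "x = adj_swap ?e 0"
      using x assms by (auto simp: nth_identity_perm nth_adj_swap_identity_perm split: if_splits)
    then have "swap12 (adj_swap ?e i) = swap12 ?e"
      using i swap12_identity_perm[OF assms] by simp
    then have "adj_swap ?e i = ?e" by (metis swap12_swap12)
    then show False using adj_swap_identity_perm_neq i by auto
  qed
  then show ?thesis by blast
qed

lemma card_ball_union_swap12_ge:
  assumes "4 \<le> n"
  shows "2 * (n - 1) \<le> card (ball_K n (identity_perm n) 1 \<union> swap12 ` ball_K n (identity_perm n) 1)"
proof -
  let ?e = "identity_perm n"
  define G1 where "G1 = insert ?e (adj_swap ?e ` {..<n - 1})"
  define G2 where "G2 = swap12 ` adj_swap ?e ` {1..<n - 1}"
  have "card G2 = n - 2"
    unfolding G2_def image_image using inj_on_adj_swap_identity_perm[of n]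
    by (subst card_image) (auto simp: inj_on_def dest: arg_cong[of _ _ swap12])
  moreover have "card G1 = n" using assms card_identity_perm_neighbours[of n] unfolding G1_def by simp
  moreover have "G1 \<inter> G2 = {}"
    using swap12_neighbours_disjoint[of n] assms unfolding G1_def G2_def by auto
  moreover have "G1 \<union> G2 \<subseteq> ball_K n ?e 1 \<union> swap12 ` ball_K n ?e 1"
    using adj_swap_in_ball_K[OF identity_perm_in_Sn] identity_perm_in_Sn[of n]
    unfolding G1_def G2_def ball_K_def by force
  then have "card (G1 \<union> G2) \<le> card (ball_K n ?e 1 \<union> swap12 ` ball_K n ?e 1)"
    by (intro card_mono) (auto simp: ball_K_def intro: finite_subset[OF _ finite_Sn])
  moreover have "finite G1" "finite G2" by (simp_all add: G1_def G2_def)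
  ultimately show ?thesis using assms by (simp add: card_Un_disjoint)
qed

theorem theorem7:
  fixes n :: nat
  assumes "n \<ge> 4"
  defines "A \<equiv> ball_K n (identity_perm n) 1 \<union> swap12 ` ball_K n (identity_perm n) 1"
  shows "is_optimal_anticode n 3 A \<and> card A = 2 * (n - 1)"
proof -
  let ?e = "identity_perm n"
  have "2 \<le> n" using assms(1) by simp
  have "swap12 ?e \<in> ball_K n ?e 1"
    using adj_swap_in_ball_K[OF identity_perm_in_Sn, of 0 n] swap12_identity_perm[OF \<open>2 \<le> n\<close>] assms(1)
    by simp
  then have "is_anticode n 3 (ball_K n ?e 1 \<union> ball_K n (swap12 ?e) 1)"
    by (intro is_anticode_ball_union identity_perm_in_Sn) (auto simp: ball_K_def)
  moreover have "A \<subseteq> ball_K n ?e 1 \<union> ball_K n (swap12 ?e) 1"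
    using swap12_ball_subset[OF \<open>2 \<le> n\<close> identity_perm_in_Sn] unfolding A_def by blast
  ultimately have "is_anticode n 3 A" by (rule is_anticode_subset)
  moreover have "card B \<le> 2 * (n - 1)" if "is_anticode n 3 B" for B
    using card_anticode_diameter_3_le[OF assms(1) that] .
  moreover have "2 * (n - 1) \<le> card A"
    unfolding A_def by (rule card_ball_union_swap12_ge[OF assms(1)])
  ultimately show ?thesis unfolding is_optimal_anticode_def using le_antisym le_trans by blast
qed

end
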